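(* Let $\mathcal{C}$ be the smallest set of functions of finite arity on $[0,1]$ (i.e. functions $[0,1]^n\to[0,1]$, $n\in\mathbb{N}$) such that: (i) $\mathcal{C}$ contains all projections $p^n_i(x_0,\dots,x_{n-1})=x_i$ ($n\in\mathbb{N}$, $0\le i<n$); (ii) if $g\in\mathcal{C}$ is $n$-ary and $a\in[0,1]$, then $\chi_a(g)\colon \mathbf{x}\mapsto\chi_a(g(\mathbf{x}))$ belongs to $\mathcal{C}$; (iii) if $g_1,g_2\in\mathcal{C}$ are $n$-ary and $b\in[0,1[$, then $\mathbf{x}\mapsto \mathsf{Med}_b(g_1(\mathbf{x}),g_2(\mathbf{x}))$ belongs to $\mathcal{C}$; (iv) if $I$ is a nonempty set with $|I|\le\mathfrak{c}=2^{\aleph_0}$ and $g_i\in\mathcal{C}$, $i\in I$, are all $n$-ary, then the pointwise supremum $\mathbf{x}\mapsto\bigvee_{i\in I}g_i(\mathbf{x})$ belongs to $\mathcal{C}$. Then $\mathcal{C}=\mathsf{Agg}$, i.e. the set of all aggregation functions on $[0,1]$ is generated by the infinitary supremum operation $\bigvee$, the functions $\chi_a$, $a\in[0,1]$, and the $b$-medians $\mathsf{Med}_b$, $b\in[0,1[$.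
   Context: For $n\in\mathbb{N}$, an $n$-ary aggregation function on $[0,1]$ is a function $f\colon[0,1]^n\to[0,1]$ which is nondecreasing (not necessarily strictly) in each coordinate and satisfies $f(0,\dots,0)=0$ and $f(1,\dots,1)=1$. $\mathsf{Agg}^n$ denotes the set of all $n$-ary aggregation functions (for $n=1$ it is not restricted to the identity), and $\mathsf{Agg}=\bigcup_{n\in\mathbb{N}}\mathsf{Agg}^n$. For $a\in[0,1]$, $\chi_a\colon[0,1]\to[0,1]$ is defined by $\chi_a(x)=1$ if $x\ge a$ and $x\neq0$, and $\chi_a(x)=0$ if $x<a$ or $x=0$ (so $\chi_0$ is the characteristic function of $]0,1]$ and, for $a>0$, $\chi_a$ is the characteristic function of $[a,1]$). For $b\in[0,1]$, the $b$-median is $\mathsf{Med}_b(x,y)=\mathsf{Med}(x,y,b)$, the median of the three numbers $x,y,b$. *)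

theory Defs
  imports Main "HOL-Library.FuncSet" "HOL-Library.Cardinality" Complex_Main
begin

text \<open>An n-ary function on [0,1] is represented by a pair (n, f) where
  f :: (nat \<Rightarrow> real) \<Rightarrow> real is extensional on the cube
  [0,1]^n = PiE {..<n} (\<lambda>_. {0..1}), i.e. f takes the value undefined outside it.\<close>

definition cube :: "nat \<Rightarrow> (nat \<Rightarrow> real) set" where
  "cube n = PiE {..<n} (\<lambda>_. {0..1})"

definition chi :: "real \<Rightarrow> real \<Rightarrow> real" where
  "chi a x = (if a \<le> x \<and> x \<noteq> 0 then 1 else 0)"

definition med3 :: "real \<Rightarrow> real \<Rightarrow> real \<Rightarrow> real" where
  "med3 x y z = max (min x y) (min (max x y) z)"

definition Med :: "real \<Rightarrow> real \<Rightarrow> real \<Rightarrow> real" where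
  "Med b x y = med3 x y b"

definition agg_fun :: "nat \<Rightarrow> ((nat \<Rightarrow> real) \<Rightarrow> real) \<Rightarrow> bool" where
  "agg_fun n f \<longleftrightarrow>
     f \<in> extensional (cube n) \<and>
     f \<in> cube n \<rightarrow> {0..1} \<and>
     (\<forall>x\<in>cube n. \<forall>i<n. \<forall>t. x i \<le> t \<and> t \<le> 1 \<longrightarrow> f x \<le> f (x(i := t))) \<and>
     f (\<lambda>i\<in>{..<n}. 0) = 0 \<and>
     f (\<lambda>i\<in>{..<n}. 1) = 1"

definition Agg :: "(nat \<times> ((nat \<Rightarrow> real) \<Rightarrow> real)) set" where
  "Agg = {(n, f). agg_fun n f}"

text \<open>Index sets of cardinality at most the continuum are represented (up to bijection)
  by nonempty subsets of the reals.\<close>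

inductive_set Cgen :: "(nat \<times> ((nat \<Rightarrow> real) \<Rightarrow> real)) set" where
  proj: "i < n \<Longrightarrow> (n, restrict (\<lambda>x. x i) (cube n)) \<in> Cgen"
| chi: "(n, g) \<in> Cgen \<Longrightarrow> a \<in> {0..1} \<Longrightarrow>
        (n, restrict (\<lambda>x. chi a (g x)) (cube n)) \<in> Cgen"
| med: "(n, g1) \<in> Cgen \<Longrightarrow> (n, g2) \<in> Cgen \<Longrightarrow> 0 \<le> b \<Longrightarrow> b < 1 \<Longrightarrow>
        (n, restrict (\<lambda>x. Med b (g1 x) (g2 x)) (cube n)) \<in> Cgen"
| sup: "(I :: real set) \<noteq> {} \<Longrightarrow> (\<And>i. i \<in> I \<Longrightarrow> (n, G i) \<in> Cgen) \<Longrightarrow>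
        (n, restrict (\<lambda>x. SUP i\<in>I. G i x) (cube n)) \<in> Cgen"

end

theory Submission
  imports Defs
begin

(* The four generating operations preserve monotonicity and the boundary values, so every
   generated function is an aggregation function. Conversely, an aggregation function f is the
   pointwise supremum over all y in the cube of the least aggregation function with value f y
   at y (1 at the top, f y on the rest of the up-set of y, 0 elsewhere). That function is the
   median Med_(f y) of the indicators of the up-sets of y and of the top, and an up-set
   indicator is the finite minimum Med_0 of the functions chi_(y i)(x i) with y i > 0.
   The supremum ranges over a set of size continuum; it is taken one coordinate at a time,
   as iterated suprema indexed by [0,1]. *)

lemma cube_memD:
  assumes "x \<in> cube n" "i < n"
  shows "0 \<le> x i" "x i \<le> 1"
  using assms unfolding cube_def by (auto simp: PiE_iff)

lemma cube_upd: "x \<in> cube n \<Longrightarrow> i < n \<Longrightarrow> 0 \<le> t \<Longrightarrow> t \<le> 1 \<Longrightarrow> x(i := t) \<in> cube n"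
  unfolding cube_def by (auto simp: PiE_iff extensional_def)

lemma const_in_cube: "0 \<le> c \<Longrightarrow> c \<le> 1 \<Longrightarrow> (\<lambda>i\<in>{..<n}. c) \<in> cube n"
  unfolding cube_def by auto

lemma cube_eqI: "x \<in> cube n \<Longrightarrow> y \<in> cube n \<Longrightarrow> (\<And>i. i < n \<Longrightarrow> x i = y i) \<Longrightarrow> x = y"
  unfolding cube_def by (metis PiE_ext lessThan_iff)

lemma cube_nonempty: "cube n \<noteq> {}"
  unfolding cube_def by (simp add: PiE_eq_empty_iff)

lemma cube_Suc: "cube (Suc k) = (\<Union>t\<in>{0..1}. (\<lambda>z. z(k := t)) ` cube k)"
  unfolding cube_def lessThan_Suc PiE_insert_eq by auto

lemma agg_funD:
  assumes "agg_fun n f"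
  shows agg_fun_extensional: "f \<in> extensional (cube n)"
    and agg_fun_range: "x \<in> cube n \<Longrightarrow> f x \<in> {0..1}"
    and agg_fun_upd_mono: "x \<in> cube n \<Longrightarrow> i < n \<Longrightarrow> x i \<le> t \<Longrightarrow> t \<le> 1 \<Longrightarrow> f x \<le> f (x(i := t))"
    and agg_fun_bot: "f (\<lambda>i\<in>{..<n}. 0) = 0"
    and agg_fun_top: "f (\<lambda>i\<in>{..<n}. 1) = 1"
  using assms unfolding agg_fun_def by auto

lemma agg_fun_restrictI:
  assumes "\<And>x. x \<in> cube n \<Longrightarrow> F x \<in> {0..1}"
    and "\<And>x i t. x \<in> cube n \<Longrightarrow> i < n \<Longrightarrow> x i \<le> t \<Longrightarrow> t \<le> 1 \<Longrightarrow> F x \<le> F (x(i := t))"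
    and "F (\<lambda>i\<in>{..<n}. 0) = 0" "F (\<lambda>i\<in>{..<n}. 1) = 1"
  shows "agg_fun n (restrict F (cube n))"
proof -
  have "x(i := t) \<in> cube n" if "x \<in> cube n" "i < n" "x i \<le> t" "t \<le> 1" for x i t
    using that cube_memD[of x n i] by (intro cube_upd) auto
  then show ?thesis
    using assms const_in_cube[of 0 n] const_in_cube[of 1 n] unfolding agg_fun_def by auto
qed

lemma agg_fun_mono:
  assumes f: "agg_fun n f" and x: "x \<in> cube n" and y: "y \<in> cube n" and le: "\<And>i. i < n \<Longrightarrow> x i \<le> y i"
  shows "f x \<le> f y"
proof -
  define z where "z k = (\<lambda>i. if i < k then y i else x i)" for k
  have "z k \<in> cube n \<and> f x \<le> f (z k)" if "k \<le> n" for k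
    using that
  proof (induction k)
    case 0
    then show ?case using x by (simp add: z_def)
  next
    case (Suc k)
    then have zk: "z k \<in> cube n" "f x \<le> f (z k)" by auto
    have upd: "z (Suc k) = (z k)(k := y k)" by (auto simp: z_def)
    have "z k k \<le> y k" "y k \<le> 1" using le Suc.prems cube_memD[OF y] by (auto simp: z_def)
    then have "z (Suc k) \<in> cube n" "f (z k) \<le> f (z (Suc k))"
      unfolding upd using cube_memD[OF y, of k] Suc.prems
      by (auto intro: cube_upd[OF zk(1)] agg_fun_upd_mono[OF f zk(1)] simp del: fun_upd_apply)
    then show ?case using zk by auto
  qed
  moreover have "z n = y"
    using calculation[of n] y by (intro cube_eqI) (auto simp: z_def)
  ultimately show ?thesis by auto
qed


lemma agg_fun_proj: "i < n \<Longrightarrow> agg_fun n (restrict (\<lambda>x. x i) (cube n))"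
  by (rule agg_fun_restrictI) (auto dest: cube_memD)

lemma agg_fun_comp2:
  assumes g1: "agg_fun n g1" and g2: "agg_fun n g2"
    and "\<And>u u' v v'. u \<le> u' \<Longrightarrow> v \<le> v' \<Longrightarrow> \<phi> u v \<le> \<phi> u' v'"
    and "\<And>u v. u \<in> {0..1} \<Longrightarrow> v \<in> {0..1} \<Longrightarrow> \<phi> u v \<in> {0..1}"
    and "\<phi> 0 0 = 0" "\<phi> 1 1 = 1"
  shows "agg_fun n (restrict (\<lambda>x. \<phi> (g1 x) (g2 x)) (cube n))"
  using assms agg_funD[OF g1] agg_funD[OF g2] by (intro agg_fun_restrictI) auto

lemma chi_mono: "0 \<le> a \<Longrightarrow> u \<le> v \<Longrightarrow> chi a u \<le> chi a v"
  unfolding chi_def by auto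

lemma Med_mono: "x \<le> x' \<Longrightarrow> y \<le> y' \<Longrightarrow> Med b x y \<le> Med b x' y'"
  unfolding Med_def med3_def by linarith

lemma agg_fun_chi:
  assumes "agg_fun n g" "a \<in> {0..1}"
  shows "agg_fun n (restrict (\<lambda>x. chi a (g x)) (cube n))"
  using assms by (intro agg_fun_comp2[of n g g "\<lambda>u v. chi a u"])
    (auto simp: chi_mono, auto simp: chi_def)

lemma agg_fun_Med:
  assumes "agg_fun n g1" "agg_fun n g2" "b \<in> {0..1}"
  shows "agg_fun n (restrict (\<lambda>x. Med b (g1 x) (g2 x)) (cube n))"
  using assms by (intro agg_fun_comp2 Med_mono) (auto simp: Med_def med3_def)

lemma agg_fun_SUP:
  assumes I: "I \<noteq> {}" and G: "\<And>i. i \<in> I \<Longrightarrow> agg_fun n (G i)"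
  shows "agg_fun n (restrict (\<lambda>x. SUP i\<in>I. G i x) (cube n))"
proof (rule agg_fun_restrictI)
  have range: "G i x \<in> {0..1}" if "x \<in> cube n" "i \<in> I" for x i
    using that G agg_fun_range by blast
  then have bdd: "bdd_above ((\<lambda>i. G i x) ` I)" if "x \<in> cube n" for x
    using that by (auto simp: bdd_above_def)
  obtain i0 where i0: "i0 \<in> I" using I by blast
  show "(SUP i\<in>I. G i x) \<in> {0..1}" if x: "x \<in> cube n" for x
  proof -
    have "0 \<le> (SUP i\<in>I. G i x)"
      using range[OF x i0] by (intro cSUP_upper2[OF bdd[OF x] i0]) auto
    moreover have "(SUP i\<in>I. G i x) \<le> 1"
      using range[OF x] I by (intro cSUP_least) auto
    ultimately show ?thesis by simp
  qed
  show "(SUP i\<in>I. G i x) \<le> (SUP i\<in>I. G i (x(j := t)))"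
    if x: "x \<in> cube n" and "j < n" "x j \<le> t" "t \<le> 1" for x j t
  proof -
    have "x(j := t) \<in> cube n"
      using that cube_memD[OF x] by (intro cube_upd) (auto intro: order_trans)
    then show ?thesis
      using that I bdd G by (intro cSUP_mono) (auto intro: agg_fun_upd_mono)
  qed
  show "(SUP i\<in>I. G i (\<lambda>i\<in>{..<n}. 0)) = 0"
    using I by (simp add: G agg_fun_bot cong: SUP_cong)
  show "(SUP i\<in>I. G i (\<lambda>i\<in>{..<n}. 1)) = 1"
    using I by (simp add: G agg_fun_top cong: SUP_cong)
qed

lemma Cgen_imp_agg_fun: "(n, g) \<in> Cgen \<Longrightarrow> agg_fun n g"
proof (induction n g rule: Cgen.induct)
  case (proj i n)
  then show ?case by (rule agg_fun_proj)
next
  case (chi n g a)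
  then show ?case by (intro agg_fun_chi)
next
  case (med n g1 g2 b)
  then show ?case by (intro agg_fun_Med) auto
next
  case (sup I n G)
  then show ?case by (intro agg_fun_SUP)
qed


lemma Cgen_restrict_cong:
  assumes g: "(n, g) \<in> Cgen" and eq: "\<And>x. x \<in> cube n \<Longrightarrow> g x = F x"
  shows "(n, restrict F (cube n)) \<in> Cgen"
proof -
  have "g = restrict g (cube n)"
    using agg_fun_extensional[OF Cgen_imp_agg_fun[OF g]] by (simp add: extensional_restrict)
  also have "\<dots> = restrict F (cube n)"
    using eq by (rule restrict_ext)
  finally show ?thesis using g by simp
qed

lemma Cgen_min:
  assumes g1: "(n, g1) \<in> Cgen" and g2: "(n, g2) \<in> Cgen"
  shows "(n, restrict (\<lambda>x. min (g1 x) (g2 x)) (cube n)) \<in> Cgen"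
proof (rule Cgen_restrict_cong[OF Cgen.med[OF g1 g2, of 0]])
  fix x assume "x \<in> cube n"
  then have "0 \<le> g1 x" "0 \<le> g2 x"
    using agg_fun_range[OF Cgen_imp_agg_fun[OF g1]] agg_fun_range[OF Cgen_imp_agg_fun[OF g2]] by auto
  with \<open>x \<in> cube n\<close> show "restrict (\<lambda>x. Med 0 (g1 x) (g2 x)) (cube n) x = min (g1 x) (g2 x)"
    by (simp add: Med_def med3_def)
qed simp_all

lemma Cgen_Min:
  assumes "finite S" "S \<noteq> {}" "\<And>i. i \<in> S \<Longrightarrow> (n, G i) \<in> Cgen"
  shows "(n, restrict (\<lambda>x. Min ((\<lambda>i. G i x) ` S)) (cube n)) \<in> Cgen"
  using assms
proof (induction S rule: finite_ne_induct)
  case (singleton i)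
  then show ?case by (intro Cgen_restrict_cong[of n "G i"]) auto
next
  case (insert i S)
  then have "(n, restrict (\<lambda>x. min (G i x) (restrict (\<lambda>x. Min ((\<lambda>i. G i x) ` S)) (cube n) x)) (cube n))
      \<in> Cgen"
    by (intro Cgen_min) auto
  then show ?case
    by (rule Cgen_restrict_cong) (use insert in simp)
qed

lemma Cgen_SUP_cube:
  "(\<And>y. y \<in> cube k \<Longrightarrow> (n, H y) \<in> Cgen) \<Longrightarrow> (n, restrict (\<lambda>x. SUP y\<in>cube k. H y x) (cube n)) \<in> Cgen"
proof (induction k arbitrary: H)
  case 0
  have "cube 0 = {\<lambda>_. undefined}" unfolding cube_def by simp
  with 0 show ?case by (intro Cgen_restrict_cong[of n "H (\<lambda>_. undefined)"]) auto
next
  case (Suc k)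
  define F where "F t = restrict (\<lambda>x. SUP z\<in>cube k. H (z(k := t)) x) (cube n)" for t
  have upd: "z(k := t) \<in> cube (Suc k)" if "z \<in> cube k" "t \<in> {0..1}" for z t
    using that cube_Suc by blast
  have "(n, F t) \<in> Cgen" if "t \<in> {0..1}" for t
    unfolding F_def using upd that by (intro Suc.IH Suc.prems) (auto simp del: fun_upd_apply)
  then have F: "(n, restrict (\<lambda>x. SUP t\<in>{0..1::real}. F t x) (cube n)) \<in> Cgen"
    by (intro Cgen.sup) auto
  show ?case
  proof (rule Cgen_restrict_cong[OF F])
    fix x assume x: "x \<in> cube n"
    have "(SUP y\<in>cube (Suc k). H y x) = (SUP y\<in>(\<Union>t\<in>{0..1}. (\<lambda>z. z(k := t)) ` cube k). H y x)"
      by (simp add: cube_Suc)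
    also have "\<dots> = (SUP t\<in>{0..1::real}. SUP y\<in>(\<lambda>z. z(k := t)) ` cube k. H y x)"
    proof (rule cSUP_UNION)
      show "bdd_above (\<Union>t\<in>{0..1}. (\<lambda>y. H y x) ` (\<lambda>z. z(k := t)) ` cube k)"
        using agg_fun_range[OF Cgen_imp_agg_fun[OF Suc.prems] x] upd
        unfolding bdd_above_def by (intro exI[of _ 1]) fastforce
    qed (use cube_nonempty in auto)
    also have "\<dots> = (SUP t\<in>{0..1::real}. F t x)"
      unfolding F_def using x by (simp add: image_comp o_def)
    finally show "restrict (\<lambda>x. SUP t\<in>{0..1::real}. F t x) (cube n) x = (SUP y\<in>cube (Suc k). H y x)"
      using x by simp
  qed
qed

definition up_indicator :: "nat \<Rightarrow> (nat \<Rightarrow> real) \<Rightarrow> (nat \<Rightarrow> real) \<Rightarrow> real" where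
  "up_indicator n y = restrict (\<lambda>x. if \<forall>i<n. y i \<le> x i then 1 else 0) (cube n)"

lemma Min_indicator:
  assumes "finite S" "S \<noteq> {}"
  shows "Min ((\<lambda>i. if P i then 1 else 0 :: real) ` S) = (if \<forall>i\<in>S. P i then 1 else 0)"
proof (cases "\<forall>i\<in>S. P i")
  case True
  then have "(\<lambda>i. if P i then 1 else 0 :: real) ` S = {1}" using assms(2) by auto
  with True show ?thesis by simp
next
  case False
  then obtain j where "j \<in> S" "\<not> P j" by blast
  then show ?thesis
    using assms False by (intro antisym Min_le) (auto intro!: Min.boundedI)
qed

lemma up_indicator_Cgen:
  assumes y: "y \<in> cube n" and nz: "\<exists>i<n. y i \<noteq> 0"
  shows "(n, up_indicator n y) \<in> Cgen"
proof -
  define S where "S = {i. i < n \<and> y i \<noteq> 0}"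
  have S: "finite S" "S \<noteq> {}" using nz by (auto simp: S_def)
  have pos: "0 < y i" if "i \<in> S" for i
    using that cube_memD[OF y] by (force simp: S_def)
  have "(n, restrict (\<lambda>x. chi (y i) (restrict (\<lambda>x. x i) (cube n) x)) (cube n)) \<in> Cgen" if "i \<in> S" for i
    using that cube_memD[OF y] by (intro Cgen.chi Cgen.proj) (auto simp: S_def)
  from Cgen_Min[OF S this] show ?thesis
    unfolding up_indicator_def
  proof (rule Cgen_restrict_cong)
    fix x assume x: "x \<in> cube n"
    have "chi (y i) (x i) = (if y i \<le> x i then 1 else 0)" if "i \<in> S" for i
      using pos[OF that] by (auto simp: chi_def)
    then have "Min ((\<lambda>i. chi (y i) (x i)) ` S) = (if \<forall>i\<in>S. y i \<le> x i then 1 else 0)"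
      using Min_indicator[OF S] by (simp cong: image_cong)
    also have "(\<forall>i\<in>S. y i \<le> x i) \<longleftrightarrow> (\<forall>i<n. y i \<le> x i)"
      using cube_memD[OF x] by (auto simp: S_def)
    finally show "restrict (\<lambda>x. Min ((\<lambda>i. restrict (\<lambda>x. chi (y i) (restrict (\<lambda>x. x i) (cube n) x)) (cube n) x) ` S)) (cube n) x
       = (if \<forall>i<n. y i \<le> x i then 1 else 0)"
      using x by simp
  qed
qed


definition step_agg :: "nat \<Rightarrow> (nat \<Rightarrow> real) \<Rightarrow> real \<Rightarrow> (nat \<Rightarrow> real) \<Rightarrow> real" where
  "step_agg n y c =
     restrict (\<lambda>x. if \<forall>i<n. x i = 1 then 1 else if \<forall>i<n. y i \<le> x i then c else 0) (cube n)"

lemma step_agg_Cgen: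
  assumes y: "y \<in> cube n" and n: "0 < n" and c: "c \<in> {0..1}" and nz: "c \<noteq> 0 \<Longrightarrow> \<exists>i<n. y i \<noteq> 0"
  shows "(n, step_agg n y c) \<in> Cgen"
proof -
  define ones where "ones = (\<lambda>i\<in>{..<n}. 1::real)"
  have T: "(n, up_indicator n ones) \<in> Cgen"
    using n by (intro up_indicator_Cgen) (auto simp: ones_def const_in_cube)
  have T_eq: "up_indicator n ones x = (if \<forall>i<n. x i = 1 then 1 else 0)" if "x \<in> cube n" for x
    using that cube_memD[OF that] by (force simp: up_indicator_def ones_def)
  consider "c = 0" | "c = 1" | "0 < c" "c < 1" using c by fastforce
  then show ?thesis
  proof cases
    case 1
    show ?thesis
      unfolding step_agg_def by (rule Cgen_restrict_cong[OF T]) (simp add: T_eq 1)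
  next
    case 2
    with nz have "(n, up_indicator n y) \<in> Cgen" by (intro up_indicator_Cgen[OF y]) auto
    then show ?thesis
      unfolding step_agg_def by (rule Cgen_restrict_cong) (auto simp: up_indicator_def 2 cube_memD[OF y])
  next
    case 3
    with nz have A: "(n, up_indicator n y) \<in> Cgen" by (intro up_indicator_Cgen[OF y]) auto
    show ?thesis
      unfolding step_agg_def
    proof (rule Cgen_restrict_cong[OF Cgen.med[OF A T, of c]])
      fix x assume x: "x \<in> cube n"
      show "restrict (\<lambda>x. Med c (up_indicator n y x) (up_indicator n ones x)) (cube n) x =
          (if \<forall>i<n. x i = 1 then 1 else if \<forall>i<n. y i \<le> x i then c else 0)"
        using x 3 cube_memD[OF y]
        by (simp add: T_eq[OF x]) (auto simp: up_indicator_def Med_def med3_def)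
    qed (use 3 in auto)
  qed
qed

lemma agg_fun_eq_1:
  "agg_fun n f \<Longrightarrow> x \<in> cube n \<Longrightarrow> \<forall>i<n. x i = 1 \<Longrightarrow> f x = 1"
  using agg_fun_top const_in_cube[of 1 n] cube_eqI[of x n] by auto

lemma agg_fun_eq_0:
  "agg_fun n f \<Longrightarrow> x \<in> cube n \<Longrightarrow> \<forall>i<n. x i = 0 \<Longrightarrow> f x = 0"
  using agg_fun_bot const_in_cube[of 0 n] cube_eqI[of x n] by auto

lemma agg_fun_arity_pos: "agg_fun n f \<Longrightarrow> 0 < n"
  using agg_fun_eq_1[of n f, OF _ const_in_cube[of 0 n]] agg_fun_eq_0[of n f, OF _ const_in_cube[of 0 n]]
  by (cases n) auto

lemma agg_fun_eq_SUP_step_agg: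
  assumes f: "agg_fun n f" and x: "x \<in> cube n"
  shows "f x = (SUP y\<in>cube n. step_agg n y (f y) x)"
proof (rule antisym)
  have below: "step_agg n y (f y) x \<le> f x" if "y \<in> cube n" for y
    using that x agg_fun_eq_1[OF f x] agg_fun_mono[OF f, of y x] agg_fun_range[OF f x]
    by (auto simp: step_agg_def)
  then show "(SUP y\<in>cube n. step_agg n y (f y) x) \<le> f x"
    using cube_nonempty by (intro cSUP_least) auto
  have "step_agg n x (f x) x = f x"
    using x agg_fun_eq_1[OF f x] by (auto simp: step_agg_def)
  with below show "f x \<le> (SUP y\<in>cube n. step_agg n y (f y) x)"
    using x by (intro cSUP_upper2[of _ _ x]) (auto simp: bdd_above_def)
qed

lemma agg_fun_imp_Cgen:
  assumes f: "agg_fun n f"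
  shows "(n, f) \<in> Cgen"
proof -
  have "(n, step_agg n y (f y)) \<in> Cgen" if "y \<in> cube n" for y
    using that agg_fun_arity_pos[OF f] agg_fun_range[OF f] agg_fun_eq_0[OF f]
    by (intro step_agg_Cgen) auto
  then have "(n, restrict (\<lambda>x. SUP y\<in>cube n. step_agg n y (f y) x) (cube n)) \<in> Cgen"
    by (rule Cgen_SUP_cube)
  moreover have "restrict (\<lambda>x. SUP y\<in>cube n. step_agg n y (f y) x) (cube n) = f"
    using agg_fun_extensional[OF f] agg_fun_eq_SUP_step_agg[OF f]
    by (intro extensionalityI[of _ "cube n"]) auto
  ultimately show ?thesis by simp
qed

theorem theorem1:
  shows "Cgen = Agg"
  unfolding Agg_def using Cgen_imp_agg_fun agg_fun_imp_Cgen by auto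

end
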